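(* Let $(\Delta,\mathfrak o,m,q)$ be a quantized Brauer graph, $G$ a finite abelian group and $W:\mathcal Z_\Delta\to G$ a Brauer weighting. Then the canonical action of $G$ on $\Delta_W$ is a free Brauer action on the quantized Brauer covering graph $(\Delta_W,\mathfrak o_W,m_W,q_W)$; that is, it is a free Brauer action on $(\Delta_W,\mathfrak o_W,m_W)$ and, for every edge $i_g$ of $\Delta_W$ with endpoints $\mu_d,\nu_e$ not truncated at either endpoint, and every $h\in G$, $$\frac{q_W(i_g,\mu_d)}{q_W(i_g,\nu_e)}=\frac{q_W\big((i_g)^h,(\mu_d)^h\big)}{q_W\big((i_g)^h,(\nu_e)^h\big)}.$$
   Context: Brauer graphs. A Brauer graph $(\Gamma,\mathfrak o,m)$ is a finite connected graph $\Gamma$ (loops and multiple edges allowed) with vertex set $\Gamma_0$, edge set $\Gamma_1$ and at least one edge, together with a multiplicity function $m:\Gamma_0\to\mathbb Z_{\ge 1}$ and, for each vertex $\mu$, a cyclic ordering $\mathfrak o$ of the edges incident with $\mu$. A loop at $\mu$ occurs twice in the cyclic ordering at $\mu$; its two occurrences are regarded as two distinct elements of $\Gamma_1$ (each with its own successor). Edge $j$ is the successor of edge $i$ at $\mu$ if $j$ immediately follows $i$ in the cyclic ordering at $\mu$. The valency $\operatorname{val}(\mu)$ is the number of edges incident with $\mu$, loops counted twice; if $\operatorname{val}(\mu)=1$ the unique edge at $\mu$ is its own successor. An edge $i$ is truncated at its endpoint $\mu$ if $\operatorname{val}(\mu)=1$ and $m(\mu)=1$. Fix a field $K$. A quantized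 Brauer graph $(\Gamma,\mathfrak o,m,q)$ is a Brauer graph with a function $q:\mathcal X_\Gamma\to K\setminus\{0\}$, $(i,\mu)\mapsto q_{i,\mu}$, where $\mathcal X_\Gamma$ is the set of pairs $(i,\mu)$ with $\mu$ an endpoint of $i$ and $i$ not truncated at either of its endpoints. Brauer actions. Let $G$ be a finite abelian group. A Brauer action of $G$ on $(\Gamma,\mathfrak o,m)$ is a faithful action $x\mapsto x^g$ of $G$ on the graph $\Gamma$ (on vertices and edges, compatible with incidence) such that for all $g\in G$: if $j$ is the successor of $i$ at $\mu$ then $j^g$ is the successor of $i^g$ at $\mu^g$, and $m(\mu^g)=m(\mu)$. It is a free Brauer action if $G$ acts freely on $\Gamma_1$. Successor weightings. For a Brauer graph $(\Delta,\mathfrak o,m)$ and $\mu\in\Delta_0$ let $\mathcal Z_\mu$ be the set of pairs $(i,j)$ of edges with $j$ the successor of $i$ at $\mu$, and $\mathcal Z_\Delta=\bigsqcup_{\mu\in\Delta_0}\mathcal Z_\mu$ (disjoint union). A successor weighting is a function $W:\mathcal Z_\Delta\to G$. Put $\omega_\mu=\prod_{(i,j)\in\mathcal Z_\mu}W(i,j)$, let $\operatorname{ord}(\mu)$ be the order of $\omega_\mu$ in $G$, and $H_\mu=\langle\omega_\mu\rangle$. $W$ is a Brauer weighting if $\operatorname{ord}(\mu)$ divides $m(\mu)$ for all $\mu\in\Delta_0$. For each $\mu$, $\sim$ is the equivalence relation on the set of pairs $(i,H_\mu g)$ ($i$ incident with $\mu$, $g\in G$) generated by $(i,H_\mu g)\sim(j,H_\mu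 gW(i,j))$ whenever $j$ is the successor of $i$ at $\mu$; the class of $(i,H_\mu g)$ is $[i,H_\mu g]$, and $\mathcal D_\mu$ is the set of classes. Brauer covering graph. The graph $\Delta_W$ has vertices $\mu_d$ ($\mu\in\Delta_0$, $d\in\mathcal D_\mu$) and edges $i_g$ ($i\in\Delta_1$, $g\in G$). If $i$ has endpoints $\mu$ and $\nu$, then $i_g$ has endpoints $\mu_{[i,H_\mu g]}$ and $\nu_{[i,H_\nu g]}$; if $i$ is a loop at $\mu$ with its two occurrences $i,\hat i$, then $i_g$ has endpoints $\mu_{[i,H_\mu g]}$ and $\mu_{[\hat i,H_\mu g]}$. The cyclic ordering $\mathfrak o_W$ is defined by: if $j$ is the successor of $i$ at $\mu$, then $j_{gW(i,j)}$ is the successor of $i_g$ at $\mu_{[i,H_\mu g]}$. For a Brauer weighting, $m_W(\mu_d)=m(\mu)/\operatorname{ord}(\mu)$; $(\Delta_W,\mathfrak o_W,m_W)$ is the Brauer covering graph. Given a quantizing function $q$ on $\Delta$, $q_W(i_g,\mu_d)=q_{i,\mu}$, and $(\Delta_W,\mathfrak o_W,m_W,q_W)$ is the quantized Brauer covering graph. The canonical action of $G$ on $\Delta_W$ is $(\mu_{[i,H_\mu g]})^h=\mu_{[i,H_\mu gh]}$ and $(i_g)^h=i_{gh}$ for $h\in G$. *)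

theory Defs
  imports "HOL-Algebra.Algebra"
begin

(* Representation of a Brauer graph (Gamma, o, m):
   - V :: 'v set      vertices
   - E :: 'e set      edges
   - half-edges ("occurrences of edges at vertices") are the pairs (e, b) with e \<in> E, b :: bool;
     ep (e,False) and ep (e,True) are the two endpoints of e (equal iff e is a loop; then
     (e,False), (e,True) are the two occurrences i, \<hat>i of the loop).
   - sc :: half-edge \<Rightarrow> half-edge:  sc x is the successor of x in the cyclic ordering at ep x.
   - mlt :: 'v \<Rightarrow> nat   multiplicity. *)

definition half_edges :: "'e set \<Rightarrow> ('e \<times> bool) set" where
  "half_edges E = E \<times> (UNIV :: bool set)"

definition incidence_rel :: "'e set \<Rightarrow> ('e \<times> bool \<Rightarrow> 'v) \<Rightarrow> ('v \<times> 'v) set" where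
  "incidence_rel E ep = {(ep (e, False), ep (e, True)) | e. e \<in> E}"

definition brauer_graph ::
  "'v set \<Rightarrow> 'e set \<Rightarrow> ('e \<times> bool \<Rightarrow> 'v) \<Rightarrow> ('e \<times> bool \<Rightarrow> 'e \<times> bool) \<Rightarrow> ('v \<Rightarrow> nat) \<Rightarrow> bool" where
  "brauer_graph V E ep sc mlt \<longleftrightarrow>
     finite V \<and> finite E \<and> E \<noteq> {} \<and>
     (\<forall>x\<in>half_edges E. ep x \<in> V) \<and>
     bij_betw sc (half_edges E) (half_edges E) \<and>
     (\<forall>x\<in>half_edges E. ep (sc x) = ep x) \<and>
     \<comment> \<open>the successor permutation at each vertex is a single cycle (a cyclic ordering)\<close>
     (\<forall>x\<in>half_edges E. \<forall>y\<in>half_edges E. ep x = ep y \<longrightarrow> (\<exists>n. (sc ^^ n) x = y)) \<and>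
     (\<forall>\<mu>\<in>V. mlt \<mu> \<ge> 1) \<and>
     \<comment> \<open>connectedness\<close>
     (\<forall>\<mu>\<in>V. \<forall>\<nu>\<in>V. (\<mu>, \<nu>) \<in> (incidence_rel E ep \<union> (incidence_rel E ep)\<inverse>)\<^sup>*)"

definition valency :: "'e set \<Rightarrow> ('e \<times> bool \<Rightarrow> 'v) \<Rightarrow> 'v \<Rightarrow> nat" where
  "valency E ep \<mu> = card {x \<in> half_edges E. ep x = \<mu>}"

definition truncated_at :: "'e set \<Rightarrow> ('e \<times> bool \<Rightarrow> 'v) \<Rightarrow> ('v \<Rightarrow> nat) \<Rightarrow> 'v \<Rightarrow> bool" where
  "truncated_at E ep mlt \<mu> \<longleftrightarrow> valency E ep \<mu> = 1 \<and> mlt \<mu> = 1"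

definition not_truncated :: "'e set \<Rightarrow> ('e \<times> bool \<Rightarrow> 'v) \<Rightarrow> ('v \<Rightarrow> nat) \<Rightarrow> 'e \<Rightarrow> bool" where
  "not_truncated E ep mlt e \<longleftrightarrow>
     \<not> truncated_at E ep mlt (ep (e, False)) \<and> \<not> truncated_at E ep mlt (ep (e, True))"

definition quantized_brauer_graph ::
  "'v set \<Rightarrow> 'e set \<Rightarrow> ('e \<times> bool \<Rightarrow> 'v) \<Rightarrow> ('e \<times> bool \<Rightarrow> 'e \<times> bool) \<Rightarrow> ('v \<Rightarrow> nat)
    \<Rightarrow> ('e \<Rightarrow> 'v \<Rightarrow> 'k::field) \<Rightarrow> bool" where
  "quantized_brauer_graph V E ep sc mlt q \<longleftrightarrow>
     brauer_graph V E ep sc mlt \<and>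
     (\<forall>e\<in>E. not_truncated E ep mlt e \<longrightarrow> q e (ep (e, False)) \<noteq> 0 \<and> q e (ep (e, True)) \<noteq> 0)"

(* Brauer action of G (right action x \<mapsto> x^g) given by its effect on vertices (av),
   edges (ae) and edge occurrences / half-edges (ah). *)
definition brauer_action ::
  "('g, 'b) monoid_scheme \<Rightarrow> 'v set \<Rightarrow> 'e set \<Rightarrow> ('e \<times> bool \<Rightarrow> 'v) \<Rightarrow> ('e \<times> bool \<Rightarrow> 'e \<times> bool)
    \<Rightarrow> ('v \<Rightarrow> nat) \<Rightarrow> ('g \<Rightarrow> 'v \<Rightarrow> 'v) \<Rightarrow> ('g \<Rightarrow> 'e \<Rightarrow> 'e) \<Rightarrow> ('g \<Rightarrow> 'e \<times> bool \<Rightarrow> 'e \<times> bool) \<Rightarrow> bool" where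
  "brauer_action G V E ep sc mlt av ae ah \<longleftrightarrow>
     \<comment> \<open>an action on the graph\<close>
     (\<forall>g\<in>carrier G. bij_betw (av g) V V \<and> bij_betw (ae g) E E \<and>
                     bij_betw (ah g) (half_edges E) (half_edges E)) \<and>
     (\<forall>x\<in>V. av \<one>\<^bsub>G\<^esub> x = x) \<and> (\<forall>e\<in>E. ae \<one>\<^bsub>G\<^esub> e = e) \<and>
     (\<forall>x\<in>half_edges E. ah \<one>\<^bsub>G\<^esub> x = x) \<and>
     (\<forall>g\<in>carrier G. \<forall>h\<in>carrier G.
        (\<forall>x\<in>V. av (g \<otimes>\<^bsub>G\<^esub> h) x = av h (av g x)) \<and>
        (\<forall>e\<in>E. ae (g \<otimes>\<^bsub>G\<^esub> h) e = ae h (ae g e)) \<and>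
        (\<forall>x\<in>half_edges E. ah (g \<otimes>\<^bsub>G\<^esub> h) x = ah h (ah g x))) \<and>
     \<comment> \<open>compatible with incidence\<close>
     (\<forall>g\<in>carrier G. \<forall>x\<in>half_edges E. fst (ah g x) = ae g (fst x) \<and> ep (ah g x) = av g (ep x)) \<and>
     \<comment> \<open>faithful\<close>
     (\<forall>g\<in>carrier G. (\<forall>x\<in>V. av g x = x) \<and> (\<forall>e\<in>E. ae g e = e) \<longrightarrow> g = \<one>\<^bsub>G\<^esub>) \<and>
     \<comment> \<open>preserves successors\<close>
     (\<forall>g\<in>carrier G. \<forall>x\<in>half_edges E. sc (ah g x) = ah g (sc x)) \<and>
     \<comment> \<open>preserves multiplicities\<close>
     (\<forall>g\<in>carrier G. \<forall>\<mu>\<in>V. mlt (av g \<mu>) = mlt \<mu>)"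

definition free_brauer_action ::
  "('g, 'b) monoid_scheme \<Rightarrow> 'v set \<Rightarrow> 'e set \<Rightarrow> ('e \<times> bool \<Rightarrow> 'v) \<Rightarrow> ('e \<times> bool \<Rightarrow> 'e \<times> bool)
    \<Rightarrow> ('v \<Rightarrow> nat) \<Rightarrow> ('g \<Rightarrow> 'v \<Rightarrow> 'v) \<Rightarrow> ('g \<Rightarrow> 'e \<Rightarrow> 'e) \<Rightarrow> ('g \<Rightarrow> 'e \<times> bool \<Rightarrow> 'e \<times> bool) \<Rightarrow> bool" where
  "free_brauer_action G V E ep sc mlt av ae ah \<longleftrightarrow>
     brauer_action G V E ep sc mlt av ae ah \<and>
     (\<forall>g\<in>carrier G. \<forall>e\<in>E. ae g e = e \<longrightarrow> g = \<one>\<^bsub>G\<^esub>)"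

(* Successor weightings. The pair (i,j) in Z_\<mu> with j the successor of i at \<mu> corresponds to
   the half-edge x (occurrence i at \<mu>), with j = sc x; so W :: half-edge \<Rightarrow> 'g. *)

definition omega :: "('g, 'b) monoid_scheme \<Rightarrow> 'e set \<Rightarrow> ('e \<times> bool \<Rightarrow> 'v) \<Rightarrow> ('e \<times> bool \<Rightarrow> 'g) \<Rightarrow> 'v \<Rightarrow> 'g" where
  "omega G E ep W \<mu> = finprod G W {x \<in> half_edges E. ep x = \<mu>}"

definition ordv :: "('g, 'b) monoid_scheme \<Rightarrow> 'e set \<Rightarrow> ('e \<times> bool \<Rightarrow> 'v) \<Rightarrow> ('e \<times> bool \<Rightarrow> 'g) \<Rightarrow> 'v \<Rightarrow> nat" where
  "ordv G E ep W \<mu> = group.ord G (omega G E ep W \<mu>)"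

definition Hsub :: "('g, 'b) monoid_scheme \<Rightarrow> 'e set \<Rightarrow> ('e \<times> bool \<Rightarrow> 'v) \<Rightarrow> ('e \<times> bool \<Rightarrow> 'g) \<Rightarrow> 'v \<Rightarrow> 'g set" where
  "Hsub G E ep W \<mu> = generate G {omega G E ep W \<mu>}"

definition successor_weighting ::
  "('g, 'b) monoid_scheme \<Rightarrow> 'e set \<Rightarrow> ('e \<times> bool \<Rightarrow> 'g) \<Rightarrow> bool" where
  "successor_weighting G E W \<longleftrightarrow> (\<forall>x\<in>half_edges E. W x \<in> carrier G)"

definition brauer_weighting ::
  "('g, 'b) monoid_scheme \<Rightarrow> 'v set \<Rightarrow> 'e set \<Rightarrow> ('e \<times> bool \<Rightarrow> 'v) \<Rightarrow> ('v \<Rightarrow> nat) \<Rightarrow> ('e \<times> bool \<Rightarrow> 'g) \<Rightarrow> bool" where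
  "brauer_weighting G V E ep mlt W \<longleftrightarrow>
     successor_weighting G E W \<and> (\<forall>\<mu>\<in>V. ordv G E ep W \<mu> dvd mlt \<mu>)"

definition sim_step ::
  "('g, 'b) monoid_scheme \<Rightarrow> 'e set \<Rightarrow> ('e \<times> bool \<Rightarrow> 'v) \<Rightarrow> ('e \<times> bool \<Rightarrow> 'e \<times> bool) \<Rightarrow> ('e \<times> bool \<Rightarrow> 'g)
    \<Rightarrow> 'v \<Rightarrow> ((('e \<times> bool) \<times> 'g set) \<times> (('e \<times> bool) \<times> 'g set)) set" where
  "sim_step G E ep sc W \<mu> =
     {((x, Hsub G E ep W \<mu> #>\<^bsub>G\<^esub> g), (sc x, Hsub G E ep W \<mu> #>\<^bsub>G\<^esub> (g \<otimes>\<^bsub>G\<^esub> W x))) | x g.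
        x \<in> half_edges E \<and> ep x = \<mu> \<and> g \<in> carrier G}"

definition sim_class ::
  "('g, 'b) monoid_scheme \<Rightarrow> 'e set \<Rightarrow> ('e \<times> bool \<Rightarrow> 'v) \<Rightarrow> ('e \<times> bool \<Rightarrow> 'e \<times> bool) \<Rightarrow> ('e \<times> bool \<Rightarrow> 'g)
    \<Rightarrow> 'v \<Rightarrow> 'e \<times> bool \<Rightarrow> 'g \<Rightarrow> (('e \<times> bool) \<times> 'g set) set" where
  "sim_class G E ep sc W \<mu> x g =
     ((sim_step G E ep sc W \<mu> \<union> (sim_step G E ep sc W \<mu>)\<inverse>)\<^sup>*) `` {(x, Hsub G E ep W \<mu> #>\<^bsub>G\<^esub> g)}"

definition D_set ::
  "('g, 'b) monoid_scheme \<Rightarrow> 'e set \<Rightarrow> ('e \<times> bool \<Rightarrow> 'v) \<Rightarrow> ('e \<times> bool \<Rightarrow> 'e \<times> bool) \<Rightarrow> ('e \<times> bool \<Rightarrow> 'g)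
    \<Rightarrow> 'v \<Rightarrow> (('e \<times> bool) \<times> 'g set) set set" where
  "D_set G E ep sc W \<mu> =
     {sim_class G E ep sc W \<mu> x g | x g. x \<in> half_edges E \<and> ep x = \<mu> \<and> g \<in> carrier G}"

(* The Brauer covering graph Delta_W. Vertices: (\<mu>, d), d \<in> D_\<mu>.  Edges: (i, g), g \<in> G.
   Half-edges: ((i, g), b), the lift of the occurrence (i, b). *)

definition cov_V ::
  "('g, 'b) monoid_scheme \<Rightarrow> 'v set \<Rightarrow> 'e set \<Rightarrow> ('e \<times> bool \<Rightarrow> 'v) \<Rightarrow> ('e \<times> bool \<Rightarrow> 'e \<times> bool) \<Rightarrow> ('e \<times> bool \<Rightarrow> 'g)
    \<Rightarrow> ('v \<times> (('e \<times> bool) \<times> 'g set) set) set" where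
  "cov_V G V E ep sc W = {(\<mu>, d) | \<mu> d. \<mu> \<in> V \<and> d \<in> D_set G E ep sc W \<mu>}"

definition cov_E :: "('g, 'b) monoid_scheme \<Rightarrow> 'e set \<Rightarrow> ('e \<times> 'g) set" where
  "cov_E G E = E \<times> carrier G"

definition cov_ep ::
  "('g, 'b) monoid_scheme \<Rightarrow> 'e set \<Rightarrow> ('e \<times> bool \<Rightarrow> 'v) \<Rightarrow> ('e \<times> bool \<Rightarrow> 'e \<times> bool) \<Rightarrow> ('e \<times> bool \<Rightarrow> 'g)
    \<Rightarrow> ('e \<times> 'g) \<times> bool \<Rightarrow> 'v \<times> (('e \<times> bool) \<times> 'g set) set" where
  "cov_ep G E ep sc W y =
     (case y of ((i, g), b) \<Rightarrow> (ep (i, b), sim_class G E ep sc W (ep (i, b)) (i, b) g))"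

definition cov_succ ::
  "('g, 'b) monoid_scheme \<Rightarrow> ('e \<times> bool \<Rightarrow> 'e \<times> bool) \<Rightarrow> ('e \<times> bool \<Rightarrow> 'g)
    \<Rightarrow> ('e \<times> 'g) \<times> bool \<Rightarrow> ('e \<times> 'g) \<times> bool" where
  "cov_succ G sc W y =
     (case y of ((i, g), b) \<Rightarrow> ((fst (sc (i, b)), g \<otimes>\<^bsub>G\<^esub> W (i, b)), snd (sc (i, b))))"

definition cov_mult ::
  "('g, 'b) monoid_scheme \<Rightarrow> 'e set \<Rightarrow> ('e \<times> bool \<Rightarrow> 'v) \<Rightarrow> ('v \<Rightarrow> nat) \<Rightarrow> ('e \<times> bool \<Rightarrow> 'g)
    \<Rightarrow> 'v \<times> (('e \<times> bool) \<times> 'g set) set \<Rightarrow> nat" where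
  "cov_mult G E ep mlt W v = mlt (fst v) div ordv G E ep W (fst v)"

definition cov_q :: "('e \<Rightarrow> 'v \<Rightarrow> 'k) \<Rightarrow> 'e \<times> 'g \<Rightarrow> 'v \<times> 'd \<Rightarrow> 'k" where
  "cov_q q ig v = q (fst ig) (fst v)"

(* canonical action: (\<mu>_[i, H g])^h = \<mu>_[i, H g h],  (i_g)^h = i_{g h} *)
definition cov_av ::
  "('g, 'b) monoid_scheme \<Rightarrow> 'e set \<Rightarrow> ('e \<times> bool \<Rightarrow> 'v) \<Rightarrow> ('e \<times> bool \<Rightarrow> 'e \<times> bool) \<Rightarrow> ('e \<times> bool \<Rightarrow> 'g)
    \<Rightarrow> 'g \<Rightarrow> 'v \<times> (('e \<times> bool) \<times> 'g set) set \<Rightarrow> 'v \<times> (('e \<times> bool) \<times> 'g set) set" where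
  "cov_av G E ep sc W h v =
     (case v of (\<mu>, d) \<Rightarrow>
        (let r = (SOME r. fst r \<in> half_edges E \<and> ep (fst r) = \<mu> \<and> snd r \<in> carrier G \<and>
                          sim_class G E ep sc W \<mu> (fst r) (snd r) = d)
         in (\<mu>, sim_class G E ep sc W \<mu> (fst r) (snd r \<otimes>\<^bsub>G\<^esub> h))))"

definition cov_ae :: "('g, 'b) monoid_scheme \<Rightarrow> 'g \<Rightarrow> 'e \<times> 'g \<Rightarrow> 'e \<times> 'g" where
  "cov_ae G h ig = (fst ig, snd ig \<otimes>\<^bsub>G\<^esub> h)"

definition cov_ah :: "('g, 'b) monoid_scheme \<Rightarrow> 'g \<Rightarrow> ('e \<times> 'g) \<times> bool \<Rightarrow> ('e \<times> 'g) \<times> bool" where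
  "cov_ah G h y = (cov_ae G h (fst y), snd y)"

end

theory Submission
  imports Defs
begin

(* The only non-obvious point is that the vertex action is well defined, i.e. that the
   class [i, H g h] depends only on the class [i, H g].  This holds because right
   translation by h maps every generating step (i, H g) ~ (j, H g W(i,j)) of the
   relation ~ to a generating step again (G is abelian), hence preserves ~.  Only that W takes values in G and that
   Delta has an edge (for faithfulness) are needed. *)

text \<open>A map \<open>f\<close> satisfying the axioms of a right action of a group on \<open>A\<close> acts by
  bijections of \<open>A\<close>: \<open>f (inv g)\<close> is an inverse of \<open>f g\<close>.\<close>

lemma (in group) right_action_bij:
  assumes one: "\<And>x. x \<in> A \<Longrightarrow> f \<one> x = x"
    and closed: "\<And>g x. g \<in> carrier G \<Longrightarrow> x \<in> A \<Longrightarrow> f g x \<in> A"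
    and mult: "\<And>g h x. g \<in> carrier G \<Longrightarrow> h \<in> carrier G \<Longrightarrow> x \<in> A \<Longrightarrow> f (g \<otimes> h) x = f h (f g x)"
    and g: "g \<in> carrier G"
  shows "bij_betw (f g) A A"
proof (rule bij_betw_byWitness[where f' = "f (inv g)"])
  show "\<forall>x\<in>A. f (inv g) (f g x) = x"
    using g by (metis mult one inv_closed r_inv)
  show "\<forall>x\<in>A. f g (f (inv g) x) = x"
    using g by (metis mult one inv_closed l_inv)
  show "f g ` A \<subseteq> A" "f (inv g) ` A \<subseteq> A"
    using g closed by auto
qed

text \<open>The reflexive transitive closure of a symmetric relation is an equivalence, so related
  elements have the same class.\<close>

lemma rtrancl_sym_Image_eq:
  assumes "sym R" and "(a, b) \<in> R\<^sup>*"
  shows "R\<^sup>* `` {a} = R\<^sup>* `` {b}"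
proof -
  have "(b, a) \<in> R\<^sup>*" using assms by (meson sym_rtrancl symD)
  then show ?thesis using assms(2) by (auto intro: rtrancl_trans)
qed

lemma cov_V_cases:
  assumes "v \<in> cov_V G V E ep sc W"
  obtains x g where "x \<in> half_edges E" "g \<in> carrier G" "ep x \<in> V"
    "v = (ep x, sim_class G E ep sc W (ep x) x g)"
  using assms unfolding cov_V_def D_set_def by blast

lemma cov_V_intro:
  "x \<in> half_edges E \<Longrightarrow> g \<in> carrier G \<Longrightarrow> ep x \<in> V \<Longrightarrow>
   (ep x, sim_class G E ep sc W (ep x) x g) \<in> cov_V G V E ep sc W"
  unfolding cov_V_def D_set_def by blast

lemma half_edges_cov_E:
  "y \<in> half_edges (cov_E G E) \<longleftrightarrow> (fst (fst y), snd y) \<in> half_edges E \<and> snd (fst y) \<in> carrier G"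
  unfolding half_edges_def cov_E_def by (cases y) auto

text \<open>The canonical action moves neither vertices nor edges of \<open>Delta_W\<close> out of their fibre over
  \<open>Delta\<close>; this is why multiplicities and the quantization are invariant.\<close>

lemma fst_cov_av: "fst (cov_av G E ep sc W h v) = fst v"
  by (cases v) (simp add: cov_av_def Let_def)

lemma cov_mult_cov_av: "cov_mult G E ep mlt W (cov_av G E ep sc W h v) = cov_mult G E ep mlt W v"
  by (simp add: cov_mult_def fst_cov_av)

lemma cov_q_cov_av: "cov_q q (cov_ae G h y) (cov_av G E ep sc W h v) = cov_q q y v"
  by (simp add: cov_q_def cov_ae_def fst_cov_av)

context
  fixes G :: "('g, 'b) monoid_scheme" (structure) and E :: "'e set"
    and ep :: "'e \<times> bool \<Rightarrow> 'v" and sc :: "'e \<times> bool \<Rightarrow> 'e \<times> bool"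
    and W :: "'e \<times> bool \<Rightarrow> 'g"
  assumes comm: "comm_group G" and weighting: "successor_weighting G E W"
begin

interpretation comm_group G by (rule comm)

lemma W_closed: "x \<in> half_edges E \<Longrightarrow> W x \<in> carrier G"
  using weighting unfolding successor_weighting_def by auto

lemma Hsub_subset: "Hsub G E ep W \<mu> \<subseteq> carrier G"
proof -
  have "omega G E ep W \<mu> \<in> carrier G"
    unfolding omega_def by (rule finprod_closed) (auto intro: W_closed)
  then show ?thesis unfolding Hsub_def using generate_incl by auto
qed

text \<open>Right translation of the coset component by \<open>h\<close> maps generating steps of \<open>\<sim>\<close> to
  generating steps: \<open>(i, H g h) \<sim> (j, H g W(i,j) h) = (j, H (g h) W(i,j))\<close> as \<open>G\<close> is abelian.\<close>

lemma sim_step_translate: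
  assumes "(a, b) \<in> sim_step G E ep sc W \<mu>" and h: "h \<in> carrier G"
  shows "(map_prod id (\<lambda>C. C #> h) a, map_prod id (\<lambda>C. C #> h) b) \<in> sim_step G E ep sc W \<mu>"
proof -
  let ?H = "Hsub G E ep W \<mu>"
  from assms(1) obtain x g where a: "a = (x, ?H #> g)" and b: "b = (sc x, ?H #> (g \<otimes> W x))"
    and x: "x \<in> half_edges E" "ep x = \<mu>" and g: "g \<in> carrier G"
    unfolding sim_step_def by blast
  have Wx: "W x \<in> carrier G" using W_closed x by auto
  have "?H #> g #> h = ?H #> (g \<otimes> h)"
    using Hsub_subset g h by (simp add: coset_mult_assoc)
  moreover have "?H #> (g \<otimes> W x) #> h = ?H #> ((g \<otimes> h) \<otimes> W x)"
    using Hsub_subset g h Wx by (simp add: coset_mult_assoc m_ac)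
  ultimately show ?thesis
    unfolding a b sim_step_def using x g h by (intro CollectI exI[of _ x] exI[of _ "g \<otimes> h"]) simp
qed

lemma sim_translate:
  assumes "(a, b) \<in> (sim_step G E ep sc W \<mu> \<union> (sim_step G E ep sc W \<mu>)\<inverse>)\<^sup>*"
    and h: "h \<in> carrier G"
  shows "(map_prod id (\<lambda>C. C #> h) a, map_prod id (\<lambda>C. C #> h) b)
           \<in> (sim_step G E ep sc W \<mu> \<union> (sim_step G E ep sc W \<mu>)\<inverse>)\<^sup>*"
  using assms(1)
proof (induction rule: rtrancl_induct)
  case base
  show ?case by simp
next
  case (step b c)
  then show ?case
    using sim_step_translate[OF _ h] by (blast intro: rtrancl_into_rtrancl)
qed

lemma sim_class_translate:
  assumes eq: "sim_class G E ep sc W \<mu> x g = sim_class G E ep sc W \<mu> x' g'"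
    and g: "g \<in> carrier G" and g': "g' \<in> carrier G" and h: "h \<in> carrier G"
  shows "sim_class G E ep sc W \<mu> x (g \<otimes> h) = sim_class G E ep sc W \<mu> x' (g' \<otimes> h)"
proof -
  let ?H = "Hsub G E ep W \<mu>" and ?R = "sim_step G E ep sc W \<mu> \<union> (sim_step G E ep sc W \<mu>)\<inverse>"
  have "(x', ?H #> g') \<in> sim_class G E ep sc W \<mu> x' g'"
    unfolding sim_class_def by simp
  then have "(x', ?H #> g') \<in> sim_class G E ep sc W \<mu> x g"
    by (simp only: eq)
  then have "((x, ?H #> g), (x', ?H #> g')) \<in> ?R\<^sup>*"
    unfolding sim_class_def by (simp only: Image_singleton_iff)
  from sim_translate[OF this h]
  have "((x, ?H #> (g \<otimes> h)), (x', ?H #> (g' \<otimes> h))) \<in> ?R\<^sup>*"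
    using Hsub_subset g g' h by (simp add: coset_mult_assoc)
  then show ?thesis
    unfolding sim_class_def by (rule rtrancl_sym_Image_eq[OF sym_Un_converse])
qed

lemma cov_av_sim_class:
  assumes x: "x \<in> half_edges E" and g: "g \<in> carrier G" and h: "h \<in> carrier G"
  shows "cov_av G E ep sc W h (ep x, sim_class G E ep sc W (ep x) x g)
         = (ep x, sim_class G E ep sc W (ep x) x (g \<otimes> h))"
proof -
  let ?P = "\<lambda>r. fst r \<in> half_edges E \<and> ep (fst r) = ep x \<and> snd r \<in> carrier G \<and>
              sim_class G E ep sc W (ep x) (fst r) (snd r) = sim_class G E ep sc W (ep x) x g"
  have "?P (x, g)" using x g by simp
  then have "?P (SOME r. ?P r)" by (rule someI)
  then have "sim_class G E ep sc W (ep x) (fst (SOME r. ?P r)) (snd (SOME r. ?P r) \<otimes> h)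
        = sim_class G E ep sc W (ep x) x (g \<otimes> h)"
    using sim_class_translate g h by blast
  then show ?thesis unfolding cov_av_def Let_def by simp
qed

lemma cov_av_one: "v \<in> cov_V G V E ep sc W \<Longrightarrow> cov_av G E ep sc W \<one> v = v"
  by (elim cov_V_cases) (simp add: cov_av_sim_class)

lemma cov_av_mult:
  "v \<in> cov_V G V E ep sc W \<Longrightarrow> g \<in> carrier G \<Longrightarrow> h \<in> carrier G \<Longrightarrow>
   cov_av G E ep sc W (g \<otimes> h) v = cov_av G E ep sc W h (cov_av G E ep sc W g v)"
  by (elim cov_V_cases) (simp add: cov_av_sim_class m_assoc)

lemma cov_av_closed:
  "v \<in> cov_V G V E ep sc W \<Longrightarrow> g \<in> carrier G \<Longrightarrow> cov_av G E ep sc W g v \<in> cov_V G V E ep sc W"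
  by (elim cov_V_cases) (simp add: cov_av_sim_class cov_V_intro)

lemma cov_ae_one: "y \<in> cov_E G E \<Longrightarrow> cov_ae G \<one> y = y"
  by (auto simp: cov_E_def cov_ae_def)

lemma cov_ae_mult:
  "y \<in> cov_E G E \<Longrightarrow> g \<in> carrier G \<Longrightarrow> h \<in> carrier G \<Longrightarrow>
   cov_ae G (g \<otimes> h) y = cov_ae G h (cov_ae G g y)"
  by (auto simp: cov_E_def cov_ae_def m_assoc)

lemma cov_ae_closed: "y \<in> cov_E G E \<Longrightarrow> g \<in> carrier G \<Longrightarrow> cov_ae G g y \<in> cov_E G E"
  by (auto simp: cov_E_def cov_ae_def)

lemma cov_ah_one: "y \<in> half_edges (cov_E G E) \<Longrightarrow> cov_ah G \<one> y = y"
  by (auto simp: half_edges_cov_E cov_ah_def cov_ae_def)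

lemma cov_ah_mult:
  "y \<in> half_edges (cov_E G E) \<Longrightarrow> g \<in> carrier G \<Longrightarrow> h \<in> carrier G \<Longrightarrow>
   cov_ah G (g \<otimes> h) y = cov_ah G h (cov_ah G g y)"
  by (auto simp: half_edges_cov_E cov_ah_def cov_ae_def m_assoc)

lemma cov_ah_closed:
  "y \<in> half_edges (cov_E G E) \<Longrightarrow> g \<in> carrier G \<Longrightarrow> cov_ah G g y \<in> half_edges (cov_E G E)"
  by (auto simp: half_edges_cov_E cov_ah_def cov_ae_def)

lemma cov_ep_cov_ah:
  assumes "y \<in> half_edges (cov_E G E)" and h: "h \<in> carrier G"
  shows "cov_ep G E ep sc W (cov_ah G h y) = cov_av G E ep sc W h (cov_ep G E ep sc W y)"
proof -
  obtain i g b where y: "y = ((i, g), b)" by (metis prod.collapse)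
  have "(i, b) \<in> half_edges E" "g \<in> carrier G" using assms(1) by (auto simp: y half_edges_cov_E)
  then show ?thesis
    by (simp add: y cov_ep_def cov_ah_def cov_ae_def cov_av_sim_class h)
qed

text \<open>Compatibility with successors: the successor of \<open>i_(g h)\<close> is
  \<open>j_(g h W(i,j)) = j_(g W(i,j) h)\<close>, using commutativity.\<close>

lemma cov_succ_cov_ah:
  assumes "y \<in> half_edges (cov_E G E)" and h: "h \<in> carrier G"
  shows "cov_succ G sc W (cov_ah G h y) = cov_ah G h (cov_succ G sc W y)"
proof -
  obtain i g b where y: "y = ((i, g), b)" by (metis prod.collapse)
  have "(i, b) \<in> half_edges E" and g: "g \<in> carrier G" using assms(1) by (auto simp: y half_edges_cov_E)
  then have "g \<otimes> h \<otimes> W (i, b) = g \<otimes> W (i, b) \<otimes> h" using W_closed h by (simp add: m_ac)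
  then show ?thesis by (simp add: y cov_succ_def cov_ah_def cov_ae_def)
qed

lemma cov_ae_free:
  assumes "y \<in> cov_E G E" and h: "h \<in> carrier G" and fixed: "cov_ae G h y = y"
  shows "h = \<one>"
proof -
  have "snd y \<otimes> h = snd y" using fixed by (simp add: cov_ae_def prod_eq_iff)
  moreover have "snd y \<in> carrier G" using assms(1) by (auto simp: cov_E_def)
  ultimately show ?thesis using h l_cancel_one by blast
qed

text \<open>Assembling the above: the canonical action is a free Brauer action on
  \<open>(Delta_W, o_W, m_W)\<close>.  Faithfulness follows from freeness since \<open>Delta\<close> has an edge.\<close>

lemma canonical_free_brauer_action:
  assumes "E \<noteq> {}"
  shows "free_brauer_action G (cov_V G V E ep sc W) (cov_E G E) (cov_ep G E ep sc W)
           (cov_succ G sc W) (cov_mult G E ep mlt W) (cov_av G E ep sc W) (cov_ae G) (cov_ah G)"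
proof -
  obtain e where "e \<in> E" using assms by blast
  then have e1: "(e, \<one>) \<in> cov_E G E" by (simp add: cov_E_def)
  have fst_cov_ah: "fst (cov_ah G h y) = cov_ae G h (fst y)" for h y
    by (simp add: cov_ah_def)
  show ?thesis
    unfolding free_brauer_action_def brauer_action_def
    by (intro conjI ballI impI right_action_bij cov_av_one cov_ae_one cov_ah_one
          cov_av_mult cov_ae_mult cov_ah_mult cov_ep_cov_ah cov_succ_cov_ah cov_mult_cov_av
          fst_cov_ah)
       (auto intro: cov_av_closed cov_ae_closed cov_ah_closed cov_ae_free e1)
qed

end

theorem proposition4p4:
  fixes G :: "('g, 'b) monoid_scheme"
    and V :: "'v set" and E :: "'e set"
    and ep :: "'e \<times> bool \<Rightarrow> 'v" and sc :: "'e \<times> bool \<Rightarrow> 'e \<times> bool"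
    and mlt :: "'v \<Rightarrow> nat" and q :: "'e \<Rightarrow> 'v \<Rightarrow> 'k::field"
    and W :: "'e \<times> bool \<Rightarrow> 'g"
  assumes "quantized_brauer_graph V E ep sc mlt q"
    and "comm_group G" and "finite (carrier G)"
    and "brauer_weighting G V E ep mlt W"
  shows "free_brauer_action G (cov_V G V E ep sc W) (cov_E G E) (cov_ep G E ep sc W)
           (cov_succ G sc W) (cov_mult G E ep mlt W)
           (cov_av G E ep sc W) (cov_ae G) (cov_ah G)
       \<and> (\<forall>y\<in>cov_E G E. \<forall>h\<in>carrier G.
            not_truncated (cov_E G E) (cov_ep G E ep sc W) (cov_mult G E ep mlt W) y \<longrightarrow>
              cov_q q y (cov_ep G E ep sc W (y, False)) / cov_q q y (cov_ep G E ep sc W (y, True))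
            = cov_q q (cov_ae G h y) (cov_av G E ep sc W h (cov_ep G E ep sc W (y, False)))
              / cov_q q (cov_ae G h y) (cov_av G E ep sc W h (cov_ep G E ep sc W (y, True))))"
proof -
  have "E \<noteq> {}"
    using assms(1) unfolding quantized_brauer_graph_def brauer_graph_def by blast
  moreover have "successor_weighting G E W"
    using assms(4) unfolding brauer_weighting_def by blast
  ultimately have "free_brauer_action G (cov_V G V E ep sc W) (cov_E G E) (cov_ep G E ep sc W)
      (cov_succ G sc W) (cov_mult G E ep mlt W) (cov_av G E ep sc W) (cov_ae G) (cov_ah G)"
    using canonical_free_brauer_action assms(2) by blast
  then show ?thesis
    by (simp add: cov_q_cov_av)
qed

end
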